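(* Under Assumption 1 (unique best action), consider the FP-UCB algorithm run for a horizon of $T\ge |A|$ steps on the finitely parameterized bandit with true parameter $\theta^o$. Then there exist constants $D_1, D_2$, depending only on $|A|$ and on the means $(\mu_i(\theta))_{i\in[L],\theta\in\Theta}$ (and not on $T$), such that $$\mathbb{E}[R(T)] \le D_1 \quad\text{if } B(\theta^o)=\varnothing,$$ and $$\mathbb{E}[R(T)] \le D_2 + 12\log(T)\sum_{i\in C(\theta^o)} \frac{\Delta_i}{\beta_i^2}\quad\text{if } B(\theta^o)\neq\varnothing.$$
   Context: Setting: there are $L$ arms $[L]=\{1,\dots,L\}$ and a known finite parameter set $\Theta$. For each $\theta\in\Theta$ and arm $i$, $P_i(\cdot;\theta)$ is a known probability distribution supported on $[0,1]$ with known mean $\mu_i(\theta)$. An unknown true parameter $\theta^o\in\Theta$ governs the rewards: the reward $X_i(\tau)$ from the $\tau$-th pull of arm $i$ is drawn from $P_i(\cdot;\theta^o)$; rewards of a given arm are i.i.d. and independent across arms. At each time $t=1,\dots,T$ the agent picks an arm $a(t)$ based on past observations. Let $a^*(\theta)=\arg\max_{i\in[L]}\mu_i(\theta)$. Assumption 1: for every $\theta\in\Theta$ the maximizer $a^*(\theta)$ is unique. Regret: $R(T)=\sum_{t=1}^T(\mu_{a^*(\theta^o)}(\theta^o)-\mu_{a(t)}(\theta^o))$. Logarithms are natural. Notation: $n_i(t)=\sum_{\tau=1}^t \mathbb{1}\{a(\tau)=i\}$; $\hat\mu_i(t)=\frac{1}{n_i(t)}\sum_{\tau=1}^{n_i(t)}X_i(\tau)$;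 $A=\{a^*(\theta):\theta\in\Theta\}$; $\Delta_i=\mu_{a^*(\theta^o)}(\theta^o)-\mu_i(\theta^o)$; $B(\theta^o)=\{\theta\in\Theta: a^*(\theta)\ne a^*(\theta^o)\text{ and } \mu_{a^*(\theta^o)}(\theta^o)=\mu_{a^*(\theta^o)}(\theta)\}$; $C(\theta^o)=\{a^*(\theta):\theta\in B(\theta^o)\}$; for $i\in C(\theta^o)$, $\beta_i=\min_{\theta\in B(\theta^o),\,a^*(\theta)=i}|\mu_i(\theta^o)-\mu_i(\theta)|$. FP-UCB algorithm: at times $t=1,\dots,|A|$ select each arm of $A$ once. Then set episode counter $k=1$, $t=|A|+1$, and while $t\le T$: let $t_k=t-1$ and compute $A_k=\{a^*(\theta):\theta\in\Theta,\ \forall i\in A,\ |\hat\mu_i(t_k)-\mu_i(\theta)|\le\sqrt{3\log(k)/n_i(t_k)}\}$; if $A_k\ne\varnothing$, select each arm of $A_k$ once (over the next $|A_k|$ time steps, $t\leftarrow t+|A_k|$), otherwise select each arm of $A$ once ($t\leftarrow t+|A|$); then $k\leftarrow k+1$. (Pulls beyond time $T$ are discarded.) *)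

theory Defs
  imports "HOL-Probability.Probability"
begin

text \<open>Arms are the natural numbers 1..L; parameters have an arbitrary type 'p.
  mu i th is the (known) mean of arm i under parameter th.\<close>

definition opt_arm :: "nat \<Rightarrow> (nat \<Rightarrow> 'p \<Rightarrow> real) \<Rightarrow> 'p \<Rightarrow> nat" where
  "opt_arm L mu th = (THE i. i \<in> {1..L} \<and> (\<forall>j\<in>{1..L}. mu j th \<le> mu i th))"

definition opt_set :: "nat \<Rightarrow> (nat \<Rightarrow> 'p \<Rightarrow> real) \<Rightarrow> 'p set \<Rightarrow> nat set" where
  "opt_set L mu Th = opt_arm L mu ` Th"

text \<open>Number of pulls of arm i in a history h (list of arms played, in order).\<close>
definition pulls :: "nat \<Rightarrow> nat list \<Rightarrow> nat" where
  "pulls i h = length (filter (\<lambda>a. a = i) h)"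

text \<open>Empirical mean of arm i after history h; X (i, tau) is the reward of the tau-th pull of arm i.\<close>
definition emp_mean :: "(nat \<times> nat \<Rightarrow> real) \<Rightarrow> nat \<Rightarrow> nat list \<Rightarrow> real" where
  "emp_mean X i h = (\<Sum>tau = 1..pulls i h. X (i, tau)) / real (pulls i h)"

definition conf_set :: "nat \<Rightarrow> (nat \<Rightarrow> 'p \<Rightarrow> real) \<Rightarrow> 'p set \<Rightarrow> (nat \<times> nat \<Rightarrow> real)
    \<Rightarrow> nat \<Rightarrow> nat list \<Rightarrow> nat set" where
  "conf_set L mu Th X k h =
     opt_arm L mu ` {th \<in> Th. \<forall>i\<in>opt_set L mu Th.
        \<bar>emp_mean X i h - mu i th\<bar> \<le> sqrt (3 * ln (real k) / real (pulls i h))}"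

text \<open>History of FP-UCB after the initialisation phase (index 0) and episodes 1..k.
  Within an episode, the arms of the set are played in increasing order.\<close>
primrec fp_hist :: "nat \<Rightarrow> (nat \<Rightarrow> 'p \<Rightarrow> real) \<Rightarrow> 'p set \<Rightarrow> (nat \<times> nat \<Rightarrow> real)
    \<Rightarrow> nat \<Rightarrow> nat list" where
  "fp_hist L mu Th X 0 = sorted_list_of_set (opt_set L mu Th)"
| "fp_hist L mu Th X (Suc k) =
     (let h = fp_hist L mu Th X k; Ak = conf_set L mu Th X (Suc k) h
      in h @ sorted_list_of_set (if Ak \<noteq> {} then Ak else opt_set L mu Th))"

text \<open>Arm played at time t (1-based) when run with horizon T; since every episode plays at
  least one arm, fp_hist ... T has length > T, and pulls beyond T are discarded.\<close>
definition fp_action :: "nat \<Rightarrow> (nat \<Rightarrow> 'p \<Rightarrow> real) \<Rightarrow> 'p set \<Rightarrow> (nat \<times> nat \<Rightarrow> real)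
    \<Rightarrow> nat \<Rightarrow> nat \<Rightarrow> nat" where
  "fp_action L mu Th X T t = fp_hist L mu Th X T ! (t - 1)"

definition fp_regret :: "nat \<Rightarrow> (nat \<Rightarrow> 'p \<Rightarrow> real) \<Rightarrow> 'p set \<Rightarrow> 'p \<Rightarrow> (nat \<times> nat \<Rightarrow> real)
    \<Rightarrow> nat \<Rightarrow> real" where
  "fp_regret L mu Th tho X T =
     (\<Sum>t = 1..T. mu (opt_arm L mu tho) tho - mu (fp_action L mu Th X T t) tho)"

text \<open>Probability space of reward tables: X (i, tau) ~ P i tho, all independent.\<close>
definition bandit_space :: "nat \<Rightarrow> (nat \<Rightarrow> 'p \<Rightarrow> real measure) \<Rightarrow> 'p \<Rightarrow> (nat \<times> nat \<Rightarrow> real) measure" where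
  "bandit_space L P tho = (\<Pi>\<^sub>M ia \<in> {1..L} \<times> {1::nat..}. P (fst ia) tho)"

definition gap :: "nat \<Rightarrow> (nat \<Rightarrow> 'p \<Rightarrow> real) \<Rightarrow> 'p \<Rightarrow> nat \<Rightarrow> real" where
  "gap L mu tho i = mu (opt_arm L mu tho) tho - mu i tho"

definition B_set :: "nat \<Rightarrow> (nat \<Rightarrow> 'p \<Rightarrow> real) \<Rightarrow> 'p set \<Rightarrow> 'p \<Rightarrow> 'p set" where
  "B_set L mu Th tho = {th \<in> Th. opt_arm L mu th \<noteq> opt_arm L mu tho \<and>
       mu (opt_arm L mu tho) tho = mu (opt_arm L mu tho) th}"

definition C_set :: "nat \<Rightarrow> (nat \<Rightarrow> 'p \<Rightarrow> real) \<Rightarrow> 'p set \<Rightarrow> 'p \<Rightarrow> nat set" where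
  "C_set L mu Th tho = opt_arm L mu ` B_set L mu Th tho"

definition beta :: "nat \<Rightarrow> (nat \<Rightarrow> 'p \<Rightarrow> real) \<Rightarrow> 'p set \<Rightarrow> 'p \<Rightarrow> nat \<Rightarrow> real" where
  "beta L mu Th tho i = Min ((\<lambda>th. \<bar>mu i tho - mu i th\<bar>) ` {th \<in> B_set L mu Th tho. opt_arm L mu th = i})"

end

theory Submission
  imports Defs
begin

(* An episode is accurate, i.e. the true parameter tho is consistent with the data, when every arm
   of A has its empirical mean within the confidence radius sqrt (3 log k / n_i) of its mean under
   tho. In an accurate episode tho survives the elimination, so a*(tho) is played; any other arm
   played is a*(th) for a consistent th, and then |mu_j th - mu_j tho| <= 2 radius_j for every j
   in A. If th is not in B(tho), taking j = a*(tho) forces n_{a*(tho)} <= 12 log k / sep^2, where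
   sep > 0 is the least change of the mean of a*(tho) between tho and such parameters; as
   n_{a*(tho)} grows in every accurate episode, this happens in O(1 + #inaccurate episodes)
   episodes. If th is in B(tho), taking j = a*(th) in C(tho) forces n_j <= 12 log T / beta_j^2,
   and each such episode raises n_j. By Hoeffding's inequality and a union bound over the possible
   sample sizes, episode k is inaccurate with probability O(|A| / k^2), so the expected number of
   inaccurate episodes is bounded independently of T. *)

(* Each counted step raises n while n is still at most c, and n starts at 1. *)
lemma card_counter_steps_below_le:
  fixes n :: "nat \<Rightarrow> nat" and P :: "nat \<Rightarrow> bool" and c :: real
  assumes step: "\<And>k. n (Suc k) = n k + of_bool (P k)"
    and start: "1 \<le> n 0" and "0 \<le> c"
  shows "real (card {k \<in> {..<N}. P k \<and> real (n k) \<le> c}) \<le> c"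
proof -
  have "(\<Sum>k<N. of_bool (P k \<and> real (n k) \<le> c)) + real (n 0) \<le> real (n N)
        \<and> (\<Sum>k<N. of_bool (P k \<and> real (n k) \<le> c)) \<le> c" for N
    by (induction N) (use start \<open>0 \<le> c\<close> in \<open>auto simp: step\<close>)
  then show ?thesis
    by (simp add: Int_def conj_commute)
qed

lemma sum_inverse_squares_le: "(\<Sum>k<N. 1 / (real (Suc k))\<^sup>2) \<le> pi\<^sup>2 / 6"
  using sum_le_suminf[OF sums_summable[OF inverse_squares_sums]] sums_unique[OF inverse_squares_sums]
  by (simp add: add.commute)

lemma exp_Hoeffding_exponent:
  fixes x n :: real
  assumes "1 \<le> x" "0 < n"
  shows "exp (- 2 * (n * sqrt (3 * ln x / n))\<^sup>2 / n) = 1 / x ^ 6"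
proof -
  have "2 * (n * sqrt (3 * ln x / n))\<^sup>2 / n = ln (x ^ 6)"
    using assms by (simp add: power_mult_distrib power2_eq_square[of n] ln_realpow field_simps)
  then show ?thesis using assms by (simp add: exp_minus inverse_eq_divide)
qed

lemma (in prob_space) indep_vars_cong_sets:
  "indep_vars M' X I \<Longrightarrow> (\<And>i. i \<in> I \<Longrightarrow> sets (M' i) = sets (N i)) \<Longrightarrow> indep_vars N X I"
  unfolding indep_vars_def by (auto cong: measurable_cong_sets indep_sets_cong)

lemma (in product_prob_space) indep_vars_components:
  assumes "finite J" "J \<noteq> {}" "J \<subseteq> I"
  shows "P.indep_vars M (\<lambda>j x. x j) J"
proof (subst P.indep_vars_finite[where E="\<lambda>j. sets (M j)"])
  show "\<forall>F\<in>(\<Pi> j\<in>J. sets (M j)). P.prob (\<Inter>j\<in>J. (\<lambda>x. x j) -` F j \<inter> space (Pi\<^sub>M I M))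
          = (\<Prod>j\<in>J. P.prob ((\<lambda>x. x j) -` F j \<inter> space (Pi\<^sub>M I M)))"
  proof
    fix F assume F: "F \<in> (\<Pi> j\<in>J. sets (M j))"
    have "emeasure (PiM I M) (\<Inter>j\<in>J. (\<lambda>x. x j) -` F j \<inter> space (PiM I M))
        = emeasure (PiM I M) {x\<in>space (PiM I M). \<forall>j\<in>J. x j \<in> F j}"
      using assms(2) by (intro arg_cong[where f="emeasure (PiM I M)"]) auto
    also have "\<dots> = (\<Prod>j\<in>J. emeasure (M j) (F j))"
      using assms F by (intro emeasure_PiM_Collect) auto
    also have "\<dots> = (\<Prod>j\<in>J. emeasure (PiM I M) ((\<lambda>x. x j) -` F j \<inter> space (PiM I M)))"
    proof (rule prod.cong[OF refl])
      fix j assume "j \<in> J"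
      then have "j \<in> I" "F j \<in> sets (M j)" using assms F by auto
      from emeasure_PiM_Collect_single[OF this]
      show "emeasure (M j) (F j) = emeasure (PiM I M) ((\<lambda>x. x j) -` F j \<inter> space (PiM I M))"
        by (simp add: vimage_def Int_def conj_commute)
    qed
    finally show "P.prob (\<Inter>j\<in>J. (\<lambda>x. x j) -` F j \<inter> space (Pi\<^sub>M I M))
          = (\<Prod>j\<in>J. P.prob ((\<lambda>x. x j) -` F j \<inter> space (Pi\<^sub>M I M)))"
      by (simp add: P.emeasure_eq_measure prod_ennreal prod_nonneg)
  qed
qed (use assms in \<open>auto simp: sets.sigma_sets_eq sets.Int_stable
      intro!: measurable_component_singleton sets.top sets.space_closed\<close>)

lemma Hoeffding_PiM_components:
  fixes M :: "'i \<Rightarrow> real measure" and J :: "'i set" and m :: real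
  assumes "product_prob_space M" and J: "finite J" "J \<noteq> {}" "J \<subseteq> I" and "0 \<le> \<epsilon>"
    and sets_M: "\<And>j. j \<in> J \<Longrightarrow> sets (M j) = sets borel"
    and bounded: "\<And>j. j \<in> J \<Longrightarrow> AE x in M j. 0 \<le> x \<and> x \<le> 1"
    and mean: "\<And>j. j \<in> J \<Longrightarrow> (\<integral>x. x \<partial>M j) = m"
  shows "measure (PiM I M) {x \<in> space (PiM I M). \<epsilon> \<le> \<bar>(\<Sum>j\<in>J. x j) - real (card J) * m\<bar>}
           \<le> 2 * exp (- 2 * \<epsilon>\<^sup>2 / real (card J))"
proof -
  interpret product_prob_space M I by fact
  have expectation: "P.expectation (\<lambda>x. x j) = m" if "j \<in> J" for j
  proof -
    have "j \<in> I" using that J by auto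
    then have "P.expectation (\<lambda>x. x j) = (\<integral>x. x \<partial>distr (PiM I M) (M j) (\<lambda>x. x j))"
      using measurable_ident_sets[OF sets_M[OF that]]
      by (subst integral_distr) (auto intro: measurable_component_singleton)
    also have "\<dots> = m" using PiM_component[OF \<open>j \<in> I\<close>] mean[OF that] by simp
    finally show ?thesis .
  qed
  interpret Hoeffding_ineq "PiM I M" J "\<lambda>j x. x j" "\<lambda>_. 0" "\<lambda>_. 1" "real (card J) * m"
  proof unfold_locales
    show "P.indep_vars (\<lambda>_. borel) (\<lambda>j x. x j) J"
      by (rule P.indep_vars_cong_sets[OF indep_vars_components[OF J]]) (simp add: sets_M)
    show "AE x in PiM I M. x j \<in> {0..1}" if "j \<in> J" for j
      using AE_component[of j "\<lambda>x. 0 \<le> x \<and> x \<le> 1"] bounded[OF that] that J by auto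
  qed (use J expectation in simp_all)
  show ?thesis
    using Hoeffding_ineq_abs_ge[OF \<open>0 \<le> \<epsilon>\<close>] J by (simp add: card_gt_0_iff)
qed

lemma mult_ln_le_half_linear:
  fixes c x :: real
  assumes "0 < c" "0 < x"
  shows "c * ln x \<le> x / 2 + c * ln (2 * c)"
proof -
  have "ln (x / (2 * c)) \<le> x / (2 * c) - 1"
    using assms by (intro ln_le_minus_one) auto
  then have "ln x \<le> x / (2 * c) + ln (2 * c)"
    using assms by (simp add: ln_div)
  then have "c * ln x \<le> c * (x / (2 * c) + ln (2 * c))"
    using assms by (intro mult_left_mono) auto
  also have "\<dots> = x / 2 + c * ln (2 * c)"
    using assms by (simp add: field_simps)
  finally show ?thesis .
qed

lemma le_of_gap_le_two_radii:
  fixes d n l :: real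
  assumes "0 < d" "d \<le> 2 * sqrt (3 * l / n)" "0 < n" "0 \<le> l"
  shows "n \<le> 12 * l / d\<^sup>2"
proof -
  have "d\<^sup>2 \<le> (2 * sqrt (3 * l / n))\<^sup>2"
    using assms by (intro power_mono) auto
  also have "\<dots> = 12 * l / n"
    using assms by (simp add: power_mult_distrib)
  finally show ?thesis
    using assms by (simp add: field_simps)
qed

lemma pulls_append: "pulls i (xs @ ys) = pulls i xs + pulls i ys"
  by (simp add: pulls_def)

lemma pulls_sorted_list_of_set:
  assumes "finite S"
  shows "pulls i (sorted_list_of_set S) = of_bool (i \<in> S)"
proof -
  have "pulls i (sorted_list_of_set S) = card ({x. x = i} \<inter> S)"
    using assms by (simp add: pulls_def distinct_length_filter)
  then show ?thesis by auto
qed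

lemma card_filter_add_card_filter_not:
  assumes "finite S"
  shows "card {x \<in> S. Q x} + card {x \<in> S. \<not> Q x} = card S"
proof -
  have "card {x \<in> S. Q x} + card {x \<in> S. \<not> Q x} = card ({x \<in> S. Q x} \<union> {x \<in> S. \<not> Q x})"
    using assms by (intro card_Un_disjoint[symmetric]) auto
  also have "{x \<in> S. Q x} \<union> {x \<in> S. \<not> Q x} = S"
    by auto
  finally show ?thesis .
qed

lemma mult_two_div_pow6_le:
  fixes x :: real
  assumes "1 \<le> x"
  shows "x * (2 / x ^ 6) \<le> 2 / x\<^sup>2"
proof -
  have "x * (2 / x ^ 6) = 2 / x ^ 5"
    using assms by (simp add: eval_nat_numeral field_simps)
  also have "\<dots> \<le> 2 / x\<^sup>2"
    using assms by (intro divide_left_mono power_increasing) auto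
  finally show ?thesis .
qed

locale fp_bandit =
  fixes L :: nat and Th :: "'p set" and mu :: "nat \<Rightarrow> 'p \<Rightarrow> real" and tho :: 'p
  assumes finite_Th: "finite Th" and tho_in_Th: "tho \<in> Th"
    and unique_opt: "\<forall>th\<in>Th. \<exists>i\<in>{1..L}. \<forall>j\<in>{1..L}. j \<noteq> i \<longrightarrow> mu j th < mu i th"
begin

abbreviation "opt \<equiv> opt_arm L mu"
abbreviation "A \<equiv> opt_set L mu Th"
abbreviation "astar \<equiv> opt tho"
abbreviation "\<Delta> \<equiv> gap L mu tho"
abbreviation "\<beta> \<equiv> beta L mu Th tho"

lemma opt_arm_eqI:
  assumes "i \<in> {1..L}" "\<forall>j\<in>{1..L}. j \<noteq> i \<longrightarrow> mu j th < mu i th"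
  shows "opt th = i"
  unfolding opt_arm_def
proof (rule the_equality)
  show "i \<in> {1..L} \<and> (\<forall>j\<in>{1..L}. mu j th \<le> mu i th)"
    using assms by force
  show "i' = i" if "i' \<in> {1..L} \<and> (\<forall>j\<in>{1..L}. mu j th \<le> mu i' th)" for i'
    using that assms by force
qed

lemma opt_arm_in_arms: "th \<in> Th \<Longrightarrow> opt th \<in> {1..L}"
  using unique_opt opt_arm_eqI by metis

lemma opt_arm_strict_max:
  "th \<in> Th \<Longrightarrow> j \<in> {1..L} \<Longrightarrow> j \<noteq> opt th \<Longrightarrow> mu j th < mu (opt th) th"
  using unique_opt opt_arm_eqI by metis

lemma opt_set_subset: "A \<subseteq> {1..L}"
  unfolding opt_set_def using opt_arm_in_arms by auto

lemma finite_opt_set: "finite A"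
  using finite_subset[OF opt_set_subset] by simp

lemma astar_in_opt_set: "astar \<in> A"
  unfolding opt_set_def using tho_in_Th by simp

lemma gap_nonneg: "i \<in> A \<Longrightarrow> 0 \<le> \<Delta> i"
  unfolding gap_def using opt_set_subset opt_arm_strict_max[OF tho_in_Th, of i]
  by (cases "i = astar") auto

(* hist X k is the history after episode k (episode 0 being the initial sweep over A), and
   played X k is the set of arms played in episode k + 1. *)
definition hist :: "(nat \<times> nat \<Rightarrow> real) \<Rightarrow> nat \<Rightarrow> nat list" where
  "hist X k = fp_hist L mu Th X k"

definition played :: "(nat \<times> nat \<Rightarrow> real) \<Rightarrow> nat \<Rightarrow> nat set" where
  "played X k =
     (let Ak = conf_set L mu Th X (Suc k) (hist X k) in if Ak \<noteq> {} then Ak else A)"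

lemma played_subset: "played X k \<subseteq> A"
  unfolding played_def conf_set_def opt_set_def by (auto simp: Let_def)

lemma finite_played: "finite (played X k)"
  using finite_subset[OF played_subset finite_opt_set] .

lemma played_nonempty: "played X k \<noteq> {}"
  using astar_in_opt_set by (auto simp: played_def Let_def)

lemma hist_0: "hist X 0 = sorted_list_of_set A"
  by (simp add: hist_def)

lemma hist_Suc: "hist X (Suc k) = hist X k @ sorted_list_of_set (played X k)"
  by (simp add: hist_def played_def Let_def)

lemma pulls_hist_0: "pulls i (hist X 0) = of_bool (i \<in> A)"
  using finite_opt_set by (simp add: hist_0 pulls_sorted_list_of_set)

lemma pulls_hist_Suc: "pulls i (hist X (Suc k)) = pulls i (hist X k) + of_bool (i \<in> played X k)"
  using finite_played by (simp add: hist_Suc pulls_append pulls_sorted_list_of_set)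

lemma pulls_hist_le: "pulls i (hist X k) \<le> Suc k"
  by (induction k) (auto simp: pulls_hist_0 pulls_hist_Suc)

lemma pulls_hist_pos: "i \<in> A \<Longrightarrow> 0 < pulls i (hist X k)"
  by (induction k) (auto simp: pulls_hist_0 pulls_hist_Suc)

lemma set_hist_subset: "set (hist X k) \<subseteq> A"
  by (induction k) (use finite_opt_set finite_played played_subset in \<open>auto simp: hist_0 hist_Suc\<close>)

lemma length_hist_gt: "k < length (hist X k)"
proof (induction k)
  case 0
  show ?case using finite_opt_set astar_in_opt_set by (auto simp: hist_0 card_gt_0_iff)
next
  case (Suc k)
  have "0 < card (played X k)" using finite_played played_nonempty by (simp add: card_gt_0_iff)
  with Suc show ?case by (simp add: hist_Suc)
qed

definition sweep_regret :: real where
  "sweep_regret = (\<Sum>i\<in>A. \<Delta> i)"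

lemma sweep_regret_nonneg: "0 \<le> sweep_regret"
  unfolding sweep_regret_def by (intro sum_nonneg gap_nonneg)

lemma episode_regret_le_sweep: "(\<Sum>i\<in>played X k. \<Delta> i) \<le> sweep_regret"
  unfolding sweep_regret_def
  by (rule sum_mono2[OF finite_opt_set played_subset]) (auto intro: gap_nonneg)

lemma sum_list_gap_hist: "sum_list (map \<Delta> (hist X k)) = sweep_regret + (\<Sum>j<k. \<Sum>i\<in>played X j. \<Delta> i)"
  by (induction k)
    (use finite_opt_set finite_played in \<open>simp_all add: sweep_regret_def hist_0 hist_Suc sum_list_distinct_conv_sum_set\<close>)

lemma fp_regret_le_sum_list_gap_hist:
  assumes "1 \<le> T"
  shows "fp_regret L mu Th tho X T \<le> sum_list (map \<Delta> (hist X (T - 1)))"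
proof -
  define xs where "xs = hist X (T - 1)"
  have T: "T = Suc (T - 1)" and "T \<le> length xs"
    using assms length_hist_gt[of "T - 1" X] unfolding xs_def by auto
  have action: "fp_action L mu Th X T t = xs ! (t - 1)" if "t \<in> {1..T}" for t
  proof -
    have "hist X T = xs @ sorted_list_of_set (played X (T - 1))"
      unfolding xs_def by (subst T) (simp add: hist_Suc)
    moreover have "t - 1 < length xs" using that \<open>T \<le> length xs\<close> by auto
    ultimately show ?thesis unfolding fp_action_def hist_def[symmetric] by (simp add: nth_append)
  qed
  have "fp_regret L mu Th tho X T = (\<Sum>t=1..T. \<Delta> (xs ! (t - 1)))"
    unfolding fp_regret_def gap_def using action by simp
  also have "\<dots> = (\<Sum>t<T. \<Delta> (xs ! t))"
    by (rule sum.reindex_bij_witness[where i=Suc and j="\<lambda>t. t - 1"]) auto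
  also have "\<dots> \<le> (\<Sum>t<length xs. \<Delta> (xs ! t))"
  proof (rule sum_mono2)
    show "0 \<le> \<Delta> (xs ! t)" if "t \<in> {..<length xs} - {..<T}" for t
      using that set_hist_subset nth_mem unfolding xs_def by (blast intro: gap_nonneg)
  qed (use \<open>T \<le> length xs\<close> in auto)
  also have "\<dots> = sum_list (map \<Delta> xs)"
    by (simp add: sum_list_sum_nth atLeast0LessThan)
  finally show ?thesis unfolding xs_def .
qed

definition radius :: "(nat \<times> nat \<Rightarrow> real) \<Rightarrow> nat \<Rightarrow> nat \<Rightarrow> real" where
  "radius X k i = sqrt (3 * ln (real (Suc k)) / real (pulls i (hist X k)))"

definition consistent :: "(nat \<times> nat \<Rightarrow> real) \<Rightarrow> nat \<Rightarrow> 'p \<Rightarrow> bool" where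
  "consistent X k th \<longleftrightarrow> (\<forall>i\<in>A. \<bar>emp_mean X i (hist X k) - mu i th\<bar> \<le> radius X k i)"

definition undersampled :: "(nat \<times> nat \<Rightarrow> real) \<Rightarrow> nat \<Rightarrow> nat \<Rightarrow> real \<Rightarrow> bool" where
  "undersampled X k i d \<longleftrightarrow> real (pulls i (hist X k)) \<le> 12 * ln (real (Suc k)) / d\<^sup>2"

lemma played_if_consistent_tho:
  assumes "consistent X k tho"
  shows "played X k = opt ` {th \<in> Th. consistent X k th}"
proof -
  have "conf_set L mu Th X (Suc k) (hist X k) = opt ` {th \<in> Th. consistent X k th}"
    unfolding conf_set_def consistent_def radius_def by simp
  moreover have "tho \<in> {th \<in> Th. consistent X k th}"
    using assms tho_in_Th by simp
  ultimately show ?thesis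
    unfolding played_def Let_def by auto
qed

lemma astar_played: "consistent X k tho \<Longrightarrow> astar \<in> played X k"
  using played_if_consistent_tho tho_in_Th by auto

lemma consistent_means_close:
  assumes "consistent X k tho" "consistent X k th" "j \<in> A"
  shows "\<bar>mu j th - mu j tho\<bar> \<le> 2 * radius X k j"
  using assms unfolding consistent_def by fastforce

lemma undersampled_if_close:
  assumes "j \<in> A" "0 < d" "d \<le> 2 * radius X k j"
  shows "undersampled X k j d"
  unfolding undersampled_def
  by (rule le_of_gap_le_two_radii[OF assms(2) assms(3)[unfolded radius_def]])
    (use pulls_hist_pos[OF assms(1)] in auto)

(* The 1 only keeps the minimum defined when there is no such parameter. *)
definition sep :: real where
  "sep = Min (insert 1 ((\<lambda>th. \<bar>mu astar th - mu astar tho\<bar>) `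
           {th \<in> Th. opt th \<noteq> astar \<and> th \<notin> B_set L mu Th tho}))"

lemma sep_pos: "0 < sep"
  unfolding sep_def using finite_Th by (subst Min_gr_iff) (auto simp: B_set_def)

lemma sep_le:
  assumes "th \<in> Th" "opt th \<noteq> astar" "th \<notin> B_set L mu Th tho"
  shows "sep \<le> \<bar>mu astar th - mu astar tho\<bar>"
  unfolding sep_def using assms finite_Th by (intro Min_le) auto

lemma C_subset: "C_set L mu Th tho \<subseteq> A"
  unfolding C_set_def opt_set_def B_set_def by auto

lemma finite_C: "finite (C_set L mu Th tho)"
  using finite_subset[OF C_subset finite_opt_set] .

lemma beta_pos_le:
  assumes "th \<in> B_set L mu Th tho"
  shows "0 < \<beta> (opt th)" and "\<beta> (opt th) \<le> \<bar>mu (opt th) tho - mu (opt th) th\<bar>"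
proof -
  define S where "S = {th' \<in> B_set L mu Th tho. opt th' = opt th}"
  have "finite S"
    unfolding S_def B_set_def using finite_Th by simp
  have "th \<in> S"
    unfolding S_def using assms by simp
  have \<beta>_eq: "\<beta> (opt th) = Min ((\<lambda>th'. \<bar>mu (opt th) tho - mu (opt th) th'\<bar>) ` S)"
    unfolding beta_def S_def by simp
  show "\<beta> (opt th) \<le> \<bar>mu (opt th) tho - mu (opt th) th\<bar>"
    unfolding \<beta>_eq using \<open>finite S\<close> \<open>th \<in> S\<close> by (intro Min_le) auto
  (* On a parameter of B the arms opt th and astar swap their order while astar keeps its mean. *)
  have "mu (opt th) tho \<noteq> mu (opt th) th'" if "th' \<in> S" for th'
  proof -
    have th': "th' \<in> Th" "opt th' = opt th" "opt th \<noteq> astar" "mu astar tho = mu astar th'"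
      using that unfolding S_def B_set_def by auto
    have "mu astar th' < mu (opt th) th'"
      using opt_arm_strict_max[OF th'(1), of astar] opt_arm_in_arms[OF tho_in_Th] th' by auto
    moreover have "mu (opt th) tho < mu astar tho"
      using opt_arm_strict_max[OF tho_in_Th, of "opt th"] opt_arm_in_arms[OF th'(1)] th' by auto
    ultimately show ?thesis using th'(4) by linarith
  qed
  then show "0 < \<beta> (opt th)"
    unfolding \<beta>_eq using \<open>finite S\<close> \<open>th \<in> S\<close> by (subst Min_gr_iff) auto
qed

definition C_regret :: "nat \<Rightarrow> real" where
  "C_regret T = 12 * ln (real T) * (\<Sum>i\<in>C_set L mu Th tho. \<Delta> i / (\<beta> i)\<^sup>2)"

lemma C_regret_nonneg: "1 \<le> T \<Longrightarrow> 0 \<le> C_regret T"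
  unfolding C_regret_def using C_subset
  by (intro mult_nonneg_nonneg sum_nonneg divide_nonneg_nonneg) (auto intro: gap_nonneg)

lemma played_arm_undersampled_in_C:
  assumes tho: "consistent X k tho" and "\<not> undersampled X k astar sep"
    and i: "i \<in> played X k" "i \<noteq> astar"
  shows "i \<in> C_set L mu Th tho \<and> undersampled X k i (\<beta> i)"
proof -
  obtain th where th: "th \<in> Th" "consistent X k th" "i = opt th"
    using i(1) played_if_consistent_tho[OF tho] by auto
  have close: "\<bar>mu j tho - mu j th\<bar> \<le> 2 * radius X k j" if "j \<in> A" for j
    using consistent_means_close[OF tho th(2) that] by (simp add: abs_minus_commute)
  have "th \<in> B_set L mu Th tho"
  proof (rule ccontr)
    assume "th \<notin> B_set L mu Th tho"
    then have "sep \<le> \<bar>mu astar th - mu astar tho\<bar>"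
      using sep_le th(1,3) i(2) by simp
    then have "undersampled X k astar sep"
      using undersampled_if_close[OF astar_in_opt_set sep_pos] close[OF astar_in_opt_set]
      by (simp add: abs_minus_commute)
    with assms(2) show False ..
  qed
  moreover have "i \<in> A"
    using i(1) played_subset by auto
  ultimately show ?thesis
    using undersampled_if_close[OF _ beta_pos_le(1)] beta_pos_le(2) close th(3)
    unfolding C_set_def by force
qed

lemma episode_regret_le:
  "(\<Sum>i\<in>played X k. \<Delta> i)
     \<le> sweep_regret * of_bool (\<not> consistent X k tho)
      + sweep_regret * of_bool (consistent X k tho \<and> undersampled X k astar sep)
      + (\<Sum>i\<in>C_set L mu Th tho. \<Delta> i * of_bool (i \<in> played X k \<and> undersampled X k i (\<beta> i)))"
    (is "?regret \<le> ?inaccurate + ?astar_few + ?C_few")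
proof -
  have "0 \<le> ?C_few"
    using C_subset by (intro sum_nonneg) (auto intro: gap_nonneg)
  show ?thesis
  proof (cases "consistent X k tho \<and> \<not> undersampled X k astar sep")
    case False
    then have "?inaccurate + ?astar_few = sweep_regret" by auto
    with episode_regret_le_sweep[of X k] \<open>0 \<le> ?C_few\<close> show ?thesis by linarith
  next
    case True
    have "?regret = (\<Sum>i\<in>played X k - {astar}. \<Delta> i)"
      using finite_played by (simp add: sum_diff1 gap_def)
    also have "\<dots> \<le> (\<Sum>i\<in>{i \<in> C_set L mu Th tho. i \<in> played X k \<and> undersampled X k i (\<beta> i)}. \<Delta> i)"
      using True played_arm_undersampled_in_C C_subset finite_C
      by (intro sum_mono2) (auto intro: gap_nonneg)
    also have "\<dots> = ?C_few"
      using finite_C by (simp add: sum.inter_filter of_bool_def if_distrib cong: if_cong)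
    finally show ?thesis using True by simp
  qed
qed

lemma pulls_astar_ge: "1 + real (card {j \<in> {..<k}. consistent X j tho}) \<le> real (pulls astar (hist X k))"
proof -
  have "1 + (\<Sum>j<k. of_bool (consistent X j tho)) \<le> real (pulls astar (hist X k))"
    by (induction k) (use astar_in_opt_set astar_played in \<open>auto simp: pulls_hist_0 pulls_hist_Suc\<close>)
  then show ?thesis by (simp add: Int_def conj_commute)
qed

definition burn_in :: real where
  "burn_in = 24 / sep\<^sup>2 * \<bar>ln (24 / sep\<^sup>2)\<bar>"

lemma burn_in_nonneg: "0 \<le> burn_in"
  unfolding burn_in_def by simp

(* The count of accurate episodes is a lower bound for n_astar, which in turn must stay below
   12 log k / sep^2 = o(k) for the episode to be counted. *)
lemma card_astar_undersampled_le:
  "real (card {k \<in> {..<N}. consistent X k tho \<and> undersampled X k astar sep})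
     \<le> 2 * real (card {k \<in> {..<N}. \<not> consistent X k tho}) + burn_in"
proof -
  define inaccurate where "inaccurate = real (card {k \<in> {..<N}. \<not> consistent X k tho})"
  define c where "c = 12 / sep\<^sup>2"
  have "0 < c" unfolding c_def using sep_pos by simp
  have "real (Suc k) \<le> 2 * inaccurate + burn_in"
    if k: "k < N" and few: "consistent X k tho \<and> undersampled X k astar sep" for k
  proof -
    have "card {j \<in> {..<k}. \<not> consistent X j tho} \<le> card {k \<in> {..<N}. \<not> consistent X k tho}"
      using k by (intro card_mono) auto
    then have "real (Suc k) - inaccurate \<le> 1 + real (card {j \<in> {..<k}. consistent X j tho})"
      using card_filter_add_card_filter_not[OF finite_lessThan, of k "\<lambda>j. consistent X j tho"]
      unfolding inaccurate_def card_lessThan by linarith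
    also have "\<dots> \<le> real (pulls astar (hist X k))"
      by (rule pulls_astar_ge)
    also have "\<dots> \<le> c * ln (real (Suc k))"
      using few unfolding undersampled_def c_def by simp
    also have "\<dots> \<le> real (Suc k) / 2 + c * ln (2 * c)"
      using \<open>0 < c\<close> by (intro mult_ln_le_half_linear) auto
    also have "\<dots> \<le> real (Suc k) / 2 + burn_in / 2"
      unfolding burn_in_def c_def using sep_pos by (simp add: divide_right_mono)
    finally show ?thesis by (simp add: field_simps)
  qed
  then have "card {k \<in> {..<N}. consistent X k tho \<and> undersampled X k astar sep}
      \<le> card {k \<in> {..<N}. True \<and> real (Suc k) \<le> 2 * inaccurate + burn_in}"
    by (intro card_mono) auto
  also have "real \<dots> \<le> 2 * inaccurate + burn_in"
    using burn_in_nonneg unfolding inaccurate_def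
    by (intro card_counter_steps_below_le[where n=Suc]) auto
  finally show ?thesis
    unfolding inaccurate_def by simp
qed

lemma card_C_undersampled_le:
  assumes "i \<in> C_set L mu Th tho" "N < T"
  shows "real (card {k \<in> {..<N}. i \<in> played X k \<and> undersampled X k i (\<beta> i)})
           \<le> 12 * ln (real T) / (\<beta> i)\<^sup>2"
proof -
  have "0 < \<beta> i"
    using assms(1) beta_pos_le(1) unfolding C_set_def by auto
  have "12 * ln (real (Suc k)) / (\<beta> i)\<^sup>2 \<le> 12 * ln (real T) / (\<beta> i)\<^sup>2" if "k < N" for k
    using that assms(2) by (intro divide_right_mono) auto
  then have "card {k \<in> {..<N}. i \<in> played X k \<and> undersampled X k i (\<beta> i)}
      \<le> card {k \<in> {..<N}. i \<in> played X k \<and> real (pulls i (hist X k)) \<le> 12 * ln (real T) / (\<beta> i)\<^sup>2}"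
    unfolding undersampled_def by (intro card_mono) fastforce+
  also have "real \<dots> \<le> 12 * ln (real T) / (\<beta> i)\<^sup>2"
    using assms C_subset
    by (intro card_counter_steps_below_le[where n="\<lambda>k. pulls i (hist X k)"])
      (auto simp: pulls_hist_Suc pulls_hist_0)
  finally show ?thesis by simp
qed

(* Deviation of the sum of the first n rewards of arm i beyond n times the radius of episode k;
   the number of pulls is random, so inaccuracy is covered by a union over all n <= k + 1. *)
definition deviates :: "(nat \<times> nat \<Rightarrow> real) \<Rightarrow> nat \<Rightarrow> nat \<Rightarrow> nat \<Rightarrow> bool" where
  "deviates X k i n \<longleftrightarrow>
     real n * sqrt (3 * ln (real (Suc k)) / real n) \<le> \<bar>(\<Sum>\<tau>=1..n. X (i, \<tau>)) - real n * mu i tho\<bar>"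

lemma inconsistent_le_deviations:
  "of_bool (\<not> consistent X k tho) \<le> (\<Sum>i\<in>A. \<Sum>n=1..Suc k. of_bool (deviates X k i n) :: real)"
proof (cases "consistent X k tho")
  case False
  then obtain i where i: "i \<in> A" "radius X k i < \<bar>emp_mean X i (hist X k) - mu i tho\<bar>"
    unfolding consistent_def by auto
  define n where "n = pulls i (hist X k)"
  have n: "n \<in> {1..Suc k}"
    unfolding n_def using pulls_hist_pos[OF i(1)] pulls_hist_le by (auto simp: Suc_le_eq)
  have "real n * sqrt (3 * ln (real (Suc k)) / real n)
      < real n * \<bar>(\<Sum>\<tau>=1..n. X (i, \<tau>)) / real n - mu i tho\<bar>"
    using i(2) n unfolding radius_def emp_mean_def n_def[symmetric] by simp
  also have "\<dots> = \<bar>(\<Sum>\<tau>=1..n. X (i, \<tau>)) - real n * mu i tho\<bar>"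
    using n by (simp add: abs_mult[symmetric] field_simps)
  finally have "deviates X k i n"
    unfolding deviates_def by simp
  then have "1 \<le> (\<Sum>n=1..Suc k. of_bool (deviates X k i n) :: real)"
    using member_le_sum[OF n, of "\<lambda>n. of_bool (deviates X k i n) :: real"] by simp
  also have "\<dots> \<le> (\<Sum>i\<in>A. \<Sum>n=1..Suc k. of_bool (deviates X k i n))"
    using i(1) finite_opt_set by (intro member_le_sum sum_nonneg) auto
  finally show ?thesis using False by simp
qed (auto intro!: sum_nonneg)

definition deviation_count :: "(nat \<times> nat \<Rightarrow> real) \<Rightarrow> nat \<Rightarrow> real" where
  "deviation_count X N = (\<Sum>k<N. \<Sum>i\<in>A. \<Sum>n=1..Suc k. of_bool (deviates X k i n))"

lemma card_inconsistent_le_deviation_count: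
  "real (card {k \<in> {..<N}. \<not> consistent X k tho}) \<le> deviation_count X N"
proof -
  have "(\<Sum>k<N. of_bool (\<not> consistent X k tho)) \<le> deviation_count X N"
    unfolding deviation_count_def by (intro sum_mono inconsistent_le_deviations)
  then show ?thesis by (simp add: Int_def conj_commute)
qed

lemma sum_episode_regret_le:
  "(\<Sum>k<N. \<Sum>i\<in>played X k. \<Delta> i)
     \<le> sweep_regret * real (card {k \<in> {..<N}. \<not> consistent X k tho})
      + sweep_regret * real (card {k \<in> {..<N}. consistent X k tho \<and> undersampled X k astar sep})
      + (\<Sum>i\<in>C_set L mu Th tho.
           \<Delta> i * real (card {k \<in> {..<N}. i \<in> played X k \<and> undersampled X k i (\<beta> i)}))"
  by (rule order_trans[OF sum_mono], rule episode_regret_le,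
      simp add: sum.distrib sum_distrib_left sum.swap[of _ "C_set L mu Th tho"]
      Int_def conj_commute mult.commute)

lemma fp_regret_le_deviations:
  assumes "1 \<le> T"
  shows "fp_regret L mu Th tho X T
     \<le> sweep_regret * (1 + burn_in) + 3 * sweep_regret * deviation_count X (T - 1) + C_regret T"
proof -
  define N where "N = T - 1"
  have "N < T" using assms unfolding N_def by simp
  define inaccurate where "inaccurate = real (card {k \<in> {..<N}. \<not> consistent X k tho})"
  have "fp_regret L mu Th tho X T \<le> sweep_regret + (\<Sum>k<N. \<Sum>i\<in>played X k. \<Delta> i)"
    using fp_regret_le_sum_list_gap_hist[OF assms] sum_list_gap_hist unfolding N_def by simp
  also have "(\<Sum>k<N. \<Sum>i\<in>played X k. \<Delta> i) \<le> sweep_regret * inaccurate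
      + sweep_regret * real (card {k \<in> {..<N}. consistent X k tho \<and> undersampled X k astar sep})
      + (\<Sum>i\<in>C_set L mu Th tho.
           \<Delta> i * real (card {k \<in> {..<N}. i \<in> played X k \<and> undersampled X k i (\<beta> i)}))"
    unfolding inaccurate_def by (rule sum_episode_regret_le)
  also have "\<dots> \<le> sweep_regret * inaccurate + sweep_regret * (2 * inaccurate + burn_in)
      + (\<Sum>i\<in>C_set L mu Th tho. \<Delta> i * (12 * ln (real T) / (\<beta> i)\<^sup>2))"
    using card_astar_undersampled_le card_C_undersampled_le[OF _ \<open>N < T\<close>]
      sweep_regret_nonneg C_subset
    unfolding inaccurate_def
    by (intro add_mono mult_left_mono sum_mono order_refl) (auto intro: gap_nonneg)
  also have "sweep_regret + \<dots> = sweep_regret * (1 + burn_in) + 3 * sweep_regret * inaccurate + C_regret T"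
    unfolding C_regret_def by (simp add: sum_distrib_left algebra_simps)
  also have "\<dots> \<le> sweep_regret * (1 + burn_in) + 3 * sweep_regret * deviation_count X N + C_regret T"
    unfolding inaccurate_def using sweep_regret_nonneg card_inconsistent_le_deviation_count
    by (intro add_mono mult_left_mono order_refl) auto
  finally show ?thesis unfolding N_def by simp
qed

definition regret_const :: real where
  "regret_const = sweep_regret * (1 + burn_in) + pi\<^sup>2 * sweep_regret * card A"

lemma regret_const_nonneg: "0 \<le> regret_const"
  unfolding regret_const_def using sweep_regret_nonneg burn_in_nonneg by simp

end

locale fp_bandit_rewards = fp_bandit L Th mu tho
  for L :: nat and Th :: "'p set" and mu :: "nat \<Rightarrow> 'p \<Rightarrow> real" and tho :: 'p +
  fixes P :: "nat \<Rightarrow> 'p \<Rightarrow> real measure"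
  assumes reward_laws: "\<forall>i\<in>{1..L}. \<forall>th\<in>Th. prob_space (P i th) \<and> sets (P i th) = sets borel \<and>
      (AE x in P i th. 0 \<le> x \<and> x \<le> 1) \<and> mu i th = (\<integral>x. x \<partial>P i th)"
begin

(* Extended by a point mass outside the arms, so that it is a family of probability spaces
   on every index, as product_prob_space demands. *)
definition reward_law :: "nat \<times> nat \<Rightarrow> real measure" where
  "reward_law ia = (if fst ia \<in> {1..L} then P (fst ia) tho else return borel 0)"

lemma prob_space_reward_law: "prob_space (reward_law ia)"
  using reward_laws tho_in_Th by (auto simp: reward_law_def intro: prob_space_return)

lemma product_prob_space_reward_law: "product_prob_space reward_law"
  unfolding product_prob_space_def product_prob_space_axioms_def product_sigma_finite_def
  using prob_space_reward_law prob_space_imp_sigma_finite by auto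

lemma bandit_space_eq: "bandit_space L P tho = PiM ({1..L} \<times> {1..}) reward_law"
  unfolding bandit_space_def reward_law_def by (rule PiM_cong) auto

abbreviation "M \<equiv> bandit_space L P tho"

lemma prob_space_bandit_space: "prob_space M"
  unfolding bandit_space_eq by (intro prob_space_PiM prob_space_reward_law)

definition deviation_event :: "nat \<Rightarrow> nat \<Rightarrow> nat \<Rightarrow> (nat \<times> nat \<Rightarrow> real) set" where
  "deviation_event k i n = {X \<in> space M. deviates X k i n}"

lemma deviation_event_in_sets:
  assumes "i \<in> A"
  shows "deviation_event k i n \<in> sets M"
proof -
  have "(\<lambda>X. X (i, \<tau>)) \<in> borel_measurable M" if "\<tau> \<in> {1..n}" for \<tau>
  proof -
    have "(i, \<tau>) \<in> {1..L} \<times> {1..}" "sets (reward_law (i, \<tau>)) = sets borel"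
      using that assms opt_set_subset reward_laws tho_in_Th by (auto simp: reward_law_def)
    then show ?thesis
      unfolding bandit_space_eq
      using measurable_component_singleton measurable_cong_sets by metis
  qed
  then show ?thesis
    unfolding deviation_event_def deviates_def by measurable
qed

lemma prob_deviation_event_le:
  assumes "i \<in> A" "n \<in> {1..Suc k}"
  shows "measure M (deviation_event k i n) \<le> 2 / real (Suc k) ^ 6"
proof -
  define J where "J = {i} \<times> {1..n}"
  have J: "finite J" "J \<noteq> {}" "J \<subseteq> {1..L} \<times> {1..}" "card J = n"
    using assms opt_set_subset unfolding J_def by (auto simp: card_cartesian_product)
  have "i \<in> {1..L}"
    using assms opt_set_subset by auto
  then have law_eq: "reward_law j = P i tho" if "j \<in> J" for j
    using that unfolding J_def reward_law_def by auto
  have laws: "sets (reward_law j) = sets borel" "AE x in reward_law j. 0 \<le> x \<and> x \<le> 1"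
    "(\<integral>x. x \<partial>reward_law j) = mu i tho" if "j \<in> J" for j
    using reward_laws tho_in_Th \<open>i \<in> {1..L}\<close> unfolding law_eq[OF that] by auto
  have row_sum: "(\<Sum>j\<in>J. X j) = (\<Sum>\<tau>=1..n. X (i, \<tau>))" for X :: "nat \<times> nat \<Rightarrow> real"
  proof -
    have "J = Pair i ` {1..n}"
      unfolding J_def by auto
    then show ?thesis
      by (simp add: sum.reindex inj_on_def)
  qed
  have "measure M (deviation_event k i n)
      \<le> 2 * exp (- 2 * (real n * sqrt (3 * ln (real (Suc k)) / real n))\<^sup>2 / real n)"
    using Hoeffding_PiM_components[OF product_prob_space_reward_law J(1-3) _ laws]
    unfolding deviation_event_def deviates_def bandit_space_eq row_sum J(4)
    by simp
  also have "\<dots> = 2 / real (Suc k) ^ 6"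
    using assms by (subst exp_Hoeffding_exponent) auto
  finally show ?thesis .
qed

lemma integral_of_bool_deviates:
  assumes "i \<in> A"
  shows "integrable M (\<lambda>X. of_bool (deviates X k i n) :: real)"
    and "(\<integral>X. of_bool (deviates X k i n) \<partial>M) = measure M (deviation_event k i n)"
proof -
  interpret prob_space M
    by (rule prob_space_bandit_space)
  have "(\<lambda>X. of_bool (deviates X k i n) :: real) = indicator {X. deviates X k i n}"
    by (auto simp: indicator_def)
  moreover have "{X. deviates X k i n} \<inter> space M = deviation_event k i n"
    by (auto simp: deviation_event_def)
  ultimately show "integrable M (\<lambda>X. of_bool (deviates X k i n) :: real)"
    and "(\<integral>X. of_bool (deviates X k i n) \<partial>M) = measure M (deviation_event k i n)"
    using deviation_event_in_sets[OF assms] by (simp_all add: integrable_indicator_iff less_top[symmetric])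
qed

lemma integrable_deviation_count: "integrable M (\<lambda>X. deviation_count X N)"
  unfolding deviation_count_def
  by (intro Bochner_Integration.integrable_sum integral_of_bool_deviates(1)) auto

lemma expected_deviation_count_le: "(\<integral>X. deviation_count X N \<partial>M) \<le> pi\<^sup>2 / 3 * card A"
proof -
  have "(\<integral>X. deviation_count X N \<partial>M)
      = (\<Sum>k<N. \<Sum>i\<in>A. \<Sum>n=1..Suc k. measure M (deviation_event k i n))"
    unfolding deviation_count_def
    by (simp add: Bochner_Integration.integral_sum Bochner_Integration.integrable_sum
        integral_of_bool_deviates del: sum_of_bool_eq sum.cl_ivl_Suc)
  also have "\<dots> \<le> (\<Sum>k<N. \<Sum>i\<in>A. \<Sum>n=1..Suc k. 2 / real (Suc k) ^ 6)"
    using prob_deviation_event_le by (intro sum_mono) auto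
  also have "\<dots> \<le> (\<Sum>k<N. 2 * card A * (1 / (real (Suc k))\<^sup>2))"
  proof (intro sum_mono)
    fix k
    have "(\<Sum>i\<in>A. \<Sum>n=1..Suc k. 2 / real (Suc k) ^ 6)
        = card A * (real (Suc k) * (2 / real (Suc k) ^ 6))"
      by simp
    also have "\<dots> \<le> card A * (2 / (real (Suc k))\<^sup>2)"
      by (intro mult_left_mono mult_two_div_pow6_le) auto
    finally show "(\<Sum>i\<in>A. \<Sum>n=1..Suc k. 2 / real (Suc k) ^ 6) \<le> 2 * card A * (1 / (real (Suc k))\<^sup>2)"
      by (simp add: mult_ac)
  qed
  also have "\<dots> = 2 * card A * (\<Sum>k<N. 1 / (real (Suc k))\<^sup>2)"
    by (simp only: sum_distrib_left)
  also have "\<dots> \<le> 2 * card A * (pi\<^sup>2 / 6)"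
    by (intro mult_left_mono sum_inverse_squares_le) auto
  finally show ?thesis by simp
qed

lemma expected_regret_le:
  assumes "card A \<le> T"
  shows "(\<integral>X. fp_regret L mu Th tho X T \<partial>M) \<le> regret_const + C_regret T"
proof -
  interpret prob_space M
    by (rule prob_space_bandit_space)
  have "0 < card A"
    using finite_opt_set astar_in_opt_set by (auto simp: card_gt_0_iff)
  with assms have "1 \<le> T"
    by linarith
  define bound where
    "bound X = sweep_regret * (1 + burn_in) + 3 * sweep_regret * deviation_count X (T - 1) + C_regret T"
    for X
  have "integrable M bound"
    unfolding bound_def using integrable_deviation_count by simp
  have "3 * sweep_regret * (\<integral>X. deviation_count X (T - 1) \<partial>M) \<le> 3 * sweep_regret * (pi\<^sup>2 / 3 * card A)"
    using expected_deviation_count_le sweep_regret_nonneg by (intro mult_left_mono) auto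
  also have "\<dots> = pi\<^sup>2 * sweep_regret * card A"
    by simp
  finally have "(\<integral>X. bound X \<partial>M) \<le> regret_const + C_regret T"
    using integrable_deviation_count unfolding bound_def regret_const_def by (simp add: prob_space)
  moreover have "(\<integral>X. fp_regret L mu Th tho X T \<partial>M) \<le> (\<integral>X. bound X \<partial>M)"
    if "integrable M (\<lambda>X. fp_regret L mu Th tho X T)"
    using integral_mono[OF that \<open>integrable M bound\<close>] fp_regret_le_deviations[OF \<open>1 \<le> T\<close>]
    unfolding bound_def by blast
  (* A non-integrable function has Bochner integral 0. *)
  moreover have "0 \<le> regret_const + C_regret T"
    using regret_const_nonneg C_regret_nonneg[OF \<open>1 \<le> T\<close>] by simp
  ultimately show ?thesis
    by (cases "integrable M (\<lambda>X. fp_regret L mu Th tho X T)") (auto simp: not_integrable_integral_eq)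
qed

end

theorem theorem1:
  fixes L :: nat and Th :: "'p set" and mu :: "nat \<Rightarrow> 'p \<Rightarrow> real" and tho :: 'p
  assumes "1 \<le> L" and "finite Th" and "tho \<in> Th"
    and "\<forall>th\<in>Th. \<exists>i\<in>{1..L}. \<forall>j\<in>{1..L}. j \<noteq> i \<longrightarrow> mu j th < mu i th"
  shows "\<exists>D1 D2 :: real. \<forall>P :: nat \<Rightarrow> 'p \<Rightarrow> real measure.
     (\<forall>i\<in>{1..L}. \<forall>th\<in>Th. prob_space (P i th) \<and> sets (P i th) = sets borel \<and>
         (AE x in P i th. 0 \<le> x \<and> x \<le> 1) \<and> mu i th = (\<integral>x. x \<partial>P i th)) \<longrightarrow>
     (\<forall>T::nat. card (opt_set L mu Th) \<le> T \<longrightarrow>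
        (B_set L mu Th tho = {} \<longrightarrow>
           (\<integral>X. fp_regret L mu Th tho X T \<partial>bandit_space L P tho) \<le> D1) \<and>
        (B_set L mu Th tho \<noteq> {} \<longrightarrow>
           (\<integral>X. fp_regret L mu Th tho X T \<partial>bandit_space L P tho)
             \<le> D2 + 12 * ln (real T) *
                (\<Sum>i\<in>C_set L mu Th tho. gap L mu tho i / (beta L mu Th tho i)\<^sup>2)))"
proof -
  (* 1 \<le> L also follows from the remaining hypotheses. *)
  interpret fp_bandit L Th mu tho
    using assms(2-4) by unfold_locales
  show ?thesis
  proof (intro exI[of _ regret_const] allI impI conjI)
    fix P :: "nat \<Rightarrow> 'p \<Rightarrow> real measure" and T :: nat
    assume "\<forall>i\<in>{1..L}. \<forall>th\<in>Th. prob_space (P i th) \<and> sets (P i th) = sets borel \<and>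
         (AE x in P i th. 0 \<le> x \<and> x \<le> 1) \<and> mu i th = (\<integral>x. x \<partial>P i th)"
      and "card (opt_set L mu Th) \<le> T"
    then interpret fp_bandit_rewards L Th mu tho P
      by unfold_locales
    from expected_regret_le[OF \<open>card A \<le> T\<close>]
    show "(\<integral>X. fp_regret L mu Th tho X T \<partial>M) \<le> regret_const" if "B_set L mu Th tho = {}"
      using that by (simp add: C_regret_def C_set_def)
    from expected_regret_le[OF \<open>card A \<le> T\<close>]
    show "(\<integral>X. fp_regret L mu Th tho X T \<partial>M)
        \<le> regret_const + 12 * ln (real T) * (\<Sum>i\<in>C_set L mu Th tho. \<Delta> i / (\<beta> i)\<^sup>2)"
      unfolding C_regret_def .
  qed
qed

end
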